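(* Consider a downlink system with $K$ users, $M$ transmit antennas, $N$ receive antennas per user and $d$ data streams per user. Let $\mathbf{H}_k\in\mathbb{C}^{N\times M}$ be channel matrices, $\sigma_k^2>0$ noise powers and $P_{\max}>0$, and let $\kappa \triangleq \max_k \sigma_{\max}(\mathbf{H}_k^H\mathbf{H}_k)>0$. For any receive matrices $\mathbf{U}=\{\mathbf{U}_k\}_{k=1}^K$, $\mathbf{U}_k\in\mathbb{C}^{N\times d}$, and any precoders $\mathbf{V}=\{\mathbf{V}_k\}_{k=1}^K$, $\mathbf{V}_k\in\mathbb{C}^{M\times d}$, satisfying $\sum_{k=1}^K\operatorname{Tr}(\mathbf{V}_k\mathbf{V}_k^H)\le P_{\max}$, the matrix $$\mathbf{E}_k=(\mathbf{I}-\mathbf{U}_k^H\mathbf{H}_k\mathbf{V}_k)(\mathbf{I}-\mathbf{U}_k^H\mathbf{H}_k\mathbf{V}_k)^H+\mathbf{U}_k^H\Big(\sum_{j\neq k}\mathbf{H}_k\mathbf{V}_j\mathbf{V}_j^H\mathbf{H}_k^H+\sigma_k^2\mathbf{I}\Big)\mathbf{U}_k$$ satisfies $$\lambda_{\min}(\mathbf{E}_k)\ge \frac{\sigma_k^2}{P_{\max}\kappa+\sigma_k^2}\quad\text{for all } k.$$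
   Context: $\sigma_{\max}(\cdot)$ denotes the largest singular value and $\lambda_{\min}(\cdot)$ the smallest eigenvalue of a Hermitian matrix; $\mathbf{I}$ is the $d\times d$ identity (or $N\times N$ identity inside the bracket). *)

theory Defs
  imports "Jordan_Normal_Form.Jordan_Normal_Form_Existence"
begin

definition herm :: "complex mat \<Rightarrow> complex mat" where
  "herm A = mat (dim_col A) (dim_row A) (\<lambda>(i,j). cnj (A $$ (j,i)))"

(* smallest eigenvalue of a Hermitian matrix (its eigenvalues are real) *)
definition lambda_min :: "complex mat \<Rightarrow> real" where
  "lambda_min A = Min (Re ` {e. eigenvalue A e})"

definition sigma_max :: "complex mat \<Rightarrow> real" where
  "sigma_max A = sqrt (Max (Re ` {e. eigenvalue (herm A * A) e}))"

definition mat_sum :: "nat \<Rightarrow> nat \<Rightarrow> (nat \<Rightarrow> complex mat) \<Rightarrow> nat list \<Rightarrow> complex mat" where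
  "mat_sum r c f js = foldr (\<lambda>j acc. f j + acc) js (0\<^sub>m r c)"

definition mtrace :: "complex mat \<Rightarrow> complex" where
  "mtrace A = (\<Sum>i<dim_row A. A $$ (i,i))"

end

theory Submission
  imports Defs "Jordan_Normal_Form.Spectral_Radius"
begin

(* Let x be an eigenvector of E_k, y = U_k x and w = V_k^H H_k^H y. Expanding the quadratic form
   gives x^H E_k x >= |x - w|^2 + sigma_k^2 |y|^2, and |w|^2 <= Tr(V_k V_k^H) |H_k^H y|^2
   <= Pmax kappa |y|^2. Minimising (|x| - |w|)^2 + sigma_k^2 |w|^2 / (Pmax kappa) over |w| leaves
   sigma_k^2 / (Pmax kappa + sigma_k^2) |x|^2.
   The estimate |H z|^2 <= sigma_max(H^H H) |z|^2 rests on bounding the Rayleigh quotient of a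
   Hermitian matrix A by its spectral radius: if z^H A z = r |z|^2 with r > t > rho(A), then
   Cauchy-Schwarz gives z^H A^(2^m) z >= r^(2^m) |z|^2 for every m, whereas the powers of A / t
   stay bounded. *)

section \<open>Conjugate transpose and the complex inner product\<close>

lemma herm_carrier [simp]: "A \<in> carrier_mat n m \<Longrightarrow> herm A \<in> carrier_mat m n"
  unfolding herm_def by auto

lemma herm_dims [simp]: "dim_row (herm A) = dim_col A" "dim_col (herm A) = dim_row A"
  unfolding herm_def by auto

lemma herm_index [simp]: "i < dim_col A \<Longrightarrow> j < dim_row A \<Longrightarrow> herm A $$ (i,j) = cnj (A $$ (j,i))"
  unfolding herm_def by auto

lemma herm_herm [simp]: "herm (herm A) = A"
  by (rule eq_matI) auto

lemma herm_one [simp]: "herm (1\<^sub>m n) = 1\<^sub>m n"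
  by (rule eq_matI) auto

lemma herm_mult: "A \<in> carrier_mat n m \<Longrightarrow> B \<in> carrier_mat m p \<Longrightarrow> herm (A * B) = herm B * herm A"
  by (rule eq_matI) (auto simp: scalar_prod_def mult.commute)

lemma herm_minus: "A \<in> carrier_mat n m \<Longrightarrow> B \<in> carrier_mat n m \<Longrightarrow> herm (A - B) = herm A - herm B"
  by (rule eq_matI) auto

lemma smult_mult_mat_vec:
  "A \<in> carrier_mat n m \<Longrightarrow> v \<in> carrier_vec m \<Longrightarrow> (c \<cdot>\<^sub>m A) *\<^sub>v v = c \<cdot>\<^sub>v (A *\<^sub>v v)"
  by (rule eq_vecI) (auto simp: scalar_prod_def sum_distrib_left ac_simps)

lemma herm_smult: "herm (c \<cdot>\<^sub>m A) = cnj c \<cdot>\<^sub>m herm A"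
  by (rule eq_matI) auto

lemma pow_mat_add: "A \<in> carrier_mat n n \<Longrightarrow> A ^\<^sub>m (a + b) = A ^\<^sub>m a * A ^\<^sub>m b"
proof (induction b)
  case (Suc b)
  then show ?case
    by (simp add: assoc_mult_mat[of "A ^\<^sub>m a" n n "A ^\<^sub>m b" n A n])
qed simp

lemma herm_pow_mat:
  assumes A: "A \<in> carrier_mat n n" and herm: "herm A = A"
  shows "herm (A ^\<^sub>m k) = A ^\<^sub>m k"
proof (induction k)
  case (Suc k)
  have "herm (A ^\<^sub>m Suc k) = A * A ^\<^sub>m k"
    using A herm Suc by (simp add: herm_mult[of _ n n _ n])
  also have "\<dots> = A ^\<^sub>m Suc k"
    using pow_mat_add[OF A, of 1 k] A by simp
  finally show ?case .
qed (use A in simp)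

lemma cscalar_prod_adjoint:
  assumes A: "A \<in> carrier_mat n m" and x: "x \<in> carrier_vec m" and y: "y \<in> carrier_vec n"
  shows "(A *\<^sub>v x) \<bullet>c y = x \<bullet>c (herm A *\<^sub>v y)"
proof -
  have "(A *\<^sub>v x) \<bullet>c y = (\<Sum>i<n. \<Sum>j<m. A $$ (i,j) * x $ j * cnj (y $ i))"
    using A x y by (simp add: scalar_prod_def sum_distrib_right atLeast0LessThan)
  also have "\<dots> = (\<Sum>j<m. \<Sum>i<n. A $$ (i,j) * x $ j * cnj (y $ i))"
    by (rule sum.swap)
  also have "\<dots> = x \<bullet>c (herm A *\<^sub>v y)"
    using A x y by (simp add: scalar_prod_def sum_distrib_left atLeast0LessThan algebra_simps)
  finally show ?thesis .
qed

definition sq_norm_vec :: "complex vec \<Rightarrow> real" where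
  "sq_norm_vec v = (\<Sum>i<dim_vec v. (cmod (v $ i))\<^sup>2)"

lemma cscalar_prod_self: "v \<bullet>c v = of_real (sq_norm_vec v)"
proof -
  have "v \<bullet>c v = (\<Sum>i<dim_vec v. v $ i * cnj (v $ i))"
    by (simp add: scalar_prod_def atLeast0LessThan)
  then show ?thesis
    by (simp only: sq_norm_vec_def of_real_sum complex_norm_square)
qed

lemma sq_norm_vec_ge_0 [simp]: "0 \<le> sq_norm_vec v"
  unfolding sq_norm_vec_def by (simp add: sum_nonneg)

lemma sq_norm_vec_zero [simp]: "sq_norm_vec (0\<^sub>v n) = 0"
  unfolding sq_norm_vec_def by simp

lemma sq_norm_vec_pos:
  assumes "v \<in> carrier_vec n" "v \<noteq> 0\<^sub>v n"
  shows "0 < sq_norm_vec v"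
proof -
  have "of_real (sq_norm_vec v) \<noteq> (0 :: complex)"
    using assms conjugate_square_eq_0_vec[of v n] by (simp flip: cscalar_prod_self)
  then show ?thesis using sq_norm_vec_ge_0[of v] by (simp add: less_le)
qed

lemma Cauchy_Schwarz_sum:
  fixes a b :: "'a \<Rightarrow> real"
  shows "(\<Sum>i\<in>I. a i * b i)\<^sup>2 \<le> (\<Sum>i\<in>I. (a i)\<^sup>2) * (\<Sum>i\<in>I. (b i)\<^sup>2)"
proof -
  \<comment> \<open>Lagrange's identity\<close>
  have swap: "(\<Sum>i\<in>I. \<Sum>j\<in>I. (a j)\<^sup>2 * (b i)\<^sup>2) = (\<Sum>i\<in>I. \<Sum>j\<in>I. (a i)\<^sup>2 * (b j)\<^sup>2)"
    by (rule sum.swap)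
  have "0 \<le> (\<Sum>i\<in>I. \<Sum>j\<in>I. (a i * b j - a j * b i)\<^sup>2)"
    by (intro sum_nonneg) simp
  also have "\<dots> = (\<Sum>i\<in>I. \<Sum>j\<in>I. (a i)\<^sup>2 * (b j)\<^sup>2) + (\<Sum>i\<in>I. \<Sum>j\<in>I. (a j)\<^sup>2 * (b i)\<^sup>2)
      - 2 * (\<Sum>i\<in>I. \<Sum>j\<in>I. (a i * b i) * (a j * b j))"
    by (simp add: power2_eq_square algebra_simps sum_subtractf sum.distrib sum_distrib_left)
  also have "\<dots> = 2 * ((\<Sum>i\<in>I. (a i)\<^sup>2) * (\<Sum>i\<in>I. (b i)\<^sup>2) - (\<Sum>i\<in>I. a i * b i)\<^sup>2)"
    unfolding swap by (simp add: sum_product power2_eq_square)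
  finally show ?thesis by simp
qed

lemma cscalar_prod_Cauchy_Schwarz:
  assumes "dim_vec x = dim_vec y"
  shows "(cmod (x \<bullet>c y))\<^sup>2 \<le> sq_norm_vec x * sq_norm_vec y"
proof -
  have "cmod (x \<bullet>c y) \<le> (\<Sum>i<dim_vec y. cmod (x $ i) * cmod (y $ i))"
    by (auto simp: scalar_prod_def atLeast0LessThan norm_mult intro: order_trans[OF norm_sum])
  then have "(cmod (x \<bullet>c y))\<^sup>2 \<le> (\<Sum>i<dim_vec y. cmod (x $ i) * cmod (y $ i))\<^sup>2"
    by (simp add: power_mono)
  also have "\<dots> \<le> sq_norm_vec x * sq_norm_vec y"
    unfolding sq_norm_vec_def using assms Cauchy_Schwarz_sum by simp
  finally show ?thesis .
qed

lemma conjugate_minus_vec: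
  fixes x w :: "'a :: conjugatable_ring vec"
  assumes "x \<in> carrier_vec n" "w \<in> carrier_vec n"
  shows "conjugate (x - w) = conjugate x - conjugate w"
proof -
  have "conjugate (a - b) = conjugate a - conjugate b" for a b :: 'a
    by (metis conjugate_dist_add conjugate_neg diff_conv_add_uminus)
  with assms show ?thesis
    by (intro eq_vecI) auto
qed

lemma sq_norm_vec_minus_ge:
  assumes x: "x \<in> carrier_vec n" and w: "w \<in> carrier_vec n"
  shows "(sqrt (sq_norm_vec x) - sqrt (sq_norm_vec w))\<^sup>2 \<le> sq_norm_vec (x - w)"
proof -
  have "cmod (x \<bullet>c w) \<le> sqrt (sq_norm_vec x) * sqrt (sq_norm_vec w)"
    using cscalar_prod_Cauchy_Schwarz[of x w] x w
    by (simp add: real_le_rsqrt flip: real_sqrt_mult)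
  then have Re_le: "Re (x \<bullet>c w) \<le> sqrt (sq_norm_vec x) * sqrt (sq_norm_vec w)"
    using complex_Re_le_cmod order_trans by blast
  have "w \<bullet>c x = cnj (x \<bullet>c w)"
    using x w by (simp add: scalar_prod_def mult.commute)
  moreover have "(x - w) \<bullet>c (x - w) = x \<bullet>c x - x \<bullet>c w - (w \<bullet>c x - w \<bullet>c w)"
    using x w by (simp add: minus_scalar_prod_distrib[of _ n] scalar_prod_minus_distrib[of _ n]
        conjugate_minus_vec)
  ultimately have "sq_norm_vec (x - w) = sq_norm_vec x - 2 * Re (x \<bullet>c w) + sq_norm_vec w"
    by (simp add: cscalar_prod_self complex_eq_iff)
  with Re_le show ?thesis
    by (simp add: power2_eq_square algebra_simps)
qed

lemma cscalar_prod_mult_adjoint: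
  assumes A: "A \<in> carrier_mat n m" and y: "y \<in> carrier_vec n"
  shows "((A * herm A) *\<^sub>v y) \<bullet>c y = of_real (sq_norm_vec (herm A *\<^sub>v y))"
  using A y cscalar_prod_adjoint[OF A mult_mat_vec_carrier[OF herm_carrier[OF A] y] y]
  by (simp add: cscalar_prod_self assoc_mult_mat_vec[of A n m "herm A" n y])

lemma sq_norm_adjoint_mult_vec_le:
  assumes H: "H \<in> carrier_mat m n" and y: "y \<in> carrier_vec m" and c: "0 \<le> c"
    and bound: "\<And>z. z \<in> carrier_vec n \<Longrightarrow> sq_norm_vec (H *\<^sub>v z) \<le> c * sq_norm_vec z"
  shows "sq_norm_vec (herm H *\<^sub>v y) \<le> c * sq_norm_vec y"
proof -
  define z where "z = herm H *\<^sub>v y"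
  have z: "z \<in> carrier_vec n"
    unfolding z_def using mult_mat_vec_carrier[OF herm_carrier[OF H] y] .
  have "of_real (sq_norm_vec z) = y \<bullet>c (H *\<^sub>v z)"
    using cscalar_prod_adjoint[OF herm_carrier[OF H] y z] by (simp add: z_def cscalar_prod_self)
  then have "cmod (y \<bullet>c (H *\<^sub>v z)) = sq_norm_vec z"
    by (metis abs_of_nonneg norm_of_real sq_norm_vec_ge_0)
  then have "(sq_norm_vec z)\<^sup>2 \<le> sq_norm_vec y * sq_norm_vec (H *\<^sub>v z)"
    using cscalar_prod_Cauchy_Schwarz[of y "H *\<^sub>v z"] H y by simp
  also have "\<dots> \<le> sq_norm_vec y * (c * sq_norm_vec z)"
    using bound[OF z] by (simp add: mult_left_mono)
  finally have "sq_norm_vec z * sq_norm_vec z \<le> sq_norm_vec z * (c * sq_norm_vec y)"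
    by (simp add: power2_eq_square ac_simps)
  then show ?thesis
    using c unfolding z_def[symmetric]
    by (cases "sq_norm_vec z = 0") (auto simp: mult_le_cancel_left_pos less_le)
qed

lemma trace_mult_adjoint:
  assumes V: "V \<in> carrier_mat m d"
  shows "Re (mtrace (V * herm V)) = (\<Sum>i<d. sq_norm_vec (col V i))"
proof -
  have "(V * herm V) $$ (j,j) = of_real (\<Sum>i<d. (cmod (V $$ (j,i)))\<^sup>2)" if "j < m" for j
    using V that unfolding of_real_sum complex_norm_square
    by (simp add: scalar_prod_def atLeast0LessThan)
  then have "Re (mtrace (V * herm V)) = (\<Sum>j<m. \<Sum>i<d. (cmod (V $$ (j,i)))\<^sup>2)"
    using V unfolding mtrace_def by (simp add: Re_sum)
  also have "\<dots> = (\<Sum>i<d. \<Sum>j<m. (cmod (V $$ (j,i)))\<^sup>2)"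
    by (rule sum.swap)
  finally show ?thesis
    using V by (simp add: sq_norm_vec_def)
qed

lemma sq_norm_adjoint_mult_vec_le_trace:
  assumes V: "V \<in> carrier_mat m d" and z: "z \<in> carrier_vec m"
  shows "sq_norm_vec (herm V *\<^sub>v z) \<le> Re (mtrace (V * herm V)) * sq_norm_vec z"
proof -
  have entry: "(herm V *\<^sub>v z) $ i = z \<bullet>c col V i" if "i < d" for i
    using V z that by (simp add: scalar_prod_def atLeast0LessThan mult.commute)
  have "sq_norm_vec (herm V *\<^sub>v z) = (\<Sum>i<d. (cmod (z \<bullet>c col V i))\<^sup>2)"
    using V entry unfolding sq_norm_vec_def by simp
  also have "\<dots> \<le> (\<Sum>i<d. sq_norm_vec z * sq_norm_vec (col V i))"
    using V z by (intro sum_mono cscalar_prod_Cauchy_Schwarz) auto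
  also have "\<dots> = Re (mtrace (V * herm V)) * sq_norm_vec z"
    by (simp add: trace_mult_adjoint[OF V] sum_distrib_left mult.commute)
  finally show ?thesis .
qed

lemma trace_mult_adjoint_le_sum:
  assumes "finite I" "k \<in> I" "\<And>j. j \<in> I \<Longrightarrow> V j \<in> carrier_mat m d"
  shows "Re (mtrace (V k * herm (V k))) \<le> Re (\<Sum>j\<in>I. mtrace (V j * herm (V j)))"
  using assms unfolding Re_sum
  by (intro member_le_sum) (auto simp: trace_mult_adjoint[OF assms(3)] sum_nonneg)

section \<open>Rayleigh quotients of Hermitian matrices\<close>

lemma hermitian_eigenvalue_real:
  assumes A: "A \<in> carrier_mat n n" and herm: "herm A = A" and ev: "eigenvalue A l"
  shows "l = of_real (Re l)"
proof -
  obtain v where v: "v \<in> carrier_vec n" "v \<noteq> 0\<^sub>v n" "A *\<^sub>v v = l \<cdot>\<^sub>v v"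
    using ev A unfolding eigenvalue_def eigenvector_def by auto
  have "l * (v \<bullet>c v) = (A *\<^sub>v v) \<bullet>c v"
    using v by simp
  also have "\<dots> = v \<bullet>c (A *\<^sub>v v)"
    using cscalar_prod_adjoint[OF A v(1) v(1)] herm by simp
  also have "\<dots> = cnj l * (v \<bullet>c v)"
    using v by (simp add: conjugate_smult_vec)
  finally have "l = cnj l"
    using sq_norm_vec_pos[OF v(1,2)] by (simp add: cscalar_prod_self)
  then show ?thesis
    by (simp add: complex_eq_iff)
qed

lemma cscalar_prod_pow_mat_double:
  assumes A: "A \<in> carrier_mat n n" and herm: "herm A = A" and z: "z \<in> carrier_vec n"
  shows "(A ^\<^sub>m (2 * k) *\<^sub>v z) \<bullet>c z = of_real (sq_norm_vec (A ^\<^sub>m k *\<^sub>v z))"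
  using cscalar_prod_mult_adjoint[OF pow_carrier_mat[OF A] z, of k] A
  by (simp add: herm_pow_mat[OF A herm] mult_2 pow_mat_add)

lemma rayleigh_pow_mat_square_le:
  assumes A: "A \<in> carrier_mat n n" and herm: "herm A = A" and z: "z \<in> carrier_vec n"
  shows "(Re ((A ^\<^sub>m k *\<^sub>v z) \<bullet>c z))\<^sup>2 \<le> sq_norm_vec z * Re ((A ^\<^sub>m (2 * k) *\<^sub>v z) \<bullet>c z)"
proof -
  have "(Re ((A ^\<^sub>m k *\<^sub>v z) \<bullet>c z))\<^sup>2 \<le> (cmod ((A ^\<^sub>m k *\<^sub>v z) \<bullet>c z))\<^sup>2"
    by (metis abs_Re_le_cmod abs_ge_zero power2_abs power_mono)
  also have "\<dots> \<le> sq_norm_vec z * sq_norm_vec (A ^\<^sub>m k *\<^sub>v z)"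
    using cscalar_prod_Cauchy_Schwarz[of "A ^\<^sub>m k *\<^sub>v z" z] A z by (simp add: mult.commute)
  finally show ?thesis
    by (simp add: cscalar_prod_pow_mat_double[OF A herm z])
qed

lemma rayleigh_pow_mat_growth:
  assumes A: "A \<in> carrier_mat n n" and herm: "herm A = A" and z: "z \<in> carrier_vec n"
    and pos: "0 < sq_norm_vec z" and r: "0 \<le> r" "r * sq_norm_vec z \<le> Re ((A *\<^sub>v z) \<bullet>c z)"
  shows "r ^ (2 ^ m) * sq_norm_vec z \<le> Re ((A ^\<^sub>m (2 ^ m) *\<^sub>v z) \<bullet>c z)"
proof (induction m)
  case 0
  then show ?case using A r by simp
next
  case (Suc m)
  have "r ^ (2 ^ Suc m) * sq_norm_vec z = (r ^ (2 ^ m) * sq_norm_vec z)\<^sup>2 / sq_norm_vec z"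
    using pos by (simp add: power2_eq_square power_mult power_add field_simps)
  also have "\<dots> \<le> (Re ((A ^\<^sub>m (2 ^ m) *\<^sub>v z) \<bullet>c z))\<^sup>2 / sq_norm_vec z"
    using Suc r by (intro divide_right_mono power_mono) auto
  also have "\<dots> \<le> Re ((A ^\<^sub>m (2 ^ Suc m) *\<^sub>v z) \<bullet>c z)"
    using rayleigh_pow_mat_square_le[OF A herm z, of "2 ^ m"] pos by (simp add: field_simps)
  finally show ?case .
qed

lemma cmod_cscalar_prod_le_norm_bound:
  assumes A: "A \<in> carrier_mat n n" and z: "z \<in> carrier_vec n" and bound: "norm_bound A c"
  shows "cmod ((A *\<^sub>v z) \<bullet>c z) \<le> c * (\<Sum>i<n. cmod (z $ i))\<^sup>2"
proof -
  have "cmod ((A *\<^sub>v z) \<bullet>c z) = cmod (\<Sum>i<n. \<Sum>j<n. A $$ (i,j) * z $ j * cnj (z $ i))"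
    using A z by (simp add: scalar_prod_def sum_distrib_right atLeast0LessThan)
  also have "\<dots> \<le> (\<Sum>i<n. \<Sum>j<n. cmod (A $$ (i,j) * z $ j * cnj (z $ i)))"
    by (rule order_trans[OF norm_sum], rule sum_mono, rule norm_sum)
  also have "\<dots> \<le> (\<Sum>i<n. \<Sum>j<n. c * (cmod (z $ j) * cmod (z $ i)))"
  proof (intro sum_mono)
    fix i j assume "i \<in> {..<n}" "j \<in> {..<n}"
    then have "cmod (A $$ (i,j)) \<le> c"
      using A bound unfolding norm_bound_def by auto
    then show "cmod (A $$ (i,j) * z $ j * cnj (z $ i)) \<le> c * (cmod (z $ j) * cmod (z $ i))"
      by (simp add: norm_mult mult_right_mono mult.assoc)
  qed
  also have "\<dots> = c * (\<Sum>i<n. cmod (z $ i))\<^sup>2"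
    by (simp add: power2_eq_square sum_distrib_left sum_distrib_right algebra_simps)
  finally show ?thesis .
qed

lemma rayleigh_le_sq_norm_vec:
  assumes A: "A \<in> carrier_mat n n" and herm: "herm A = A" and z: "z \<in> carrier_vec n"
    and radius: "spectral_radius A < 1"
  shows "Re ((A *\<^sub>v z) \<bullet>c z) \<le> sq_norm_vec z"
proof (rule ccontr)
  assume "\<not> ?thesis"
  then have gt: "sq_norm_vec z < Re ((A *\<^sub>v z) \<bullet>c z)" by simp
  define N where "N = sq_norm_vec z"
  define r where "r = Re ((A *\<^sub>v z) \<bullet>c z) / N"
  define Z where "Z = (\<Sum>i<n. cmod (z $ i))\<^sup>2"
  have "z \<noteq> 0\<^sub>v n"
    using gt A by auto
  then have N: "0 < N"
    unfolding N_def using sq_norm_vec_pos z by blast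
  then have r: "1 < r"
    using gt by (simp add: r_def N_def)
  obtain c where c: "\<And>k. norm_bound (A ^\<^sub>m k) c"
    using spectral_radius_jnf_norm_bound_less_1_upper_triangular[OF A radius] by auto
  have bound: "r ^ (2 ^ m) \<le> c * Z / N" for m
  proof -
    have "r ^ (2 ^ m) * N \<le> Re ((A ^\<^sub>m (2 ^ m) *\<^sub>v z) \<bullet>c z)"
      using rayleigh_pow_mat_growth[OF A herm z] N r by (simp add: N_def r_def)
    also have "\<dots> \<le> c * Z"
      unfolding Z_def using A z c
      by (intro order_trans[OF complex_Re_le_cmod] cmod_cscalar_prod_le_norm_bound) auto
    finally show ?thesis
      using N by (simp add: field_simps)
  qed
  obtain m where "c * Z / N < r ^ m"
    using real_arch_pow[OF r] by blast
  also have "\<dots> \<le> r ^ (2 ^ m)"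
    using r by (intro power_increasing) (auto intro: less_imp_le less_exp)
  finally show False
    using bound[of m] by simp
qed

lemma spectral_radius_scaled_less_1:
  assumes A: "A \<in> carrier_mat n n" and n: "0 < n" and radius: "spectral_radius A < t"
  shows "spectral_radius (of_real (1 / t) \<cdot>\<^sub>m A) < 1"
proof -
  let ?C = "of_real (1 / t) \<cdot>\<^sub>m A"
  have C: "?C \<in> carrier_mat n n" using A by simp
  have t: "0 < t"
    using spectral_radius_mem_max(1)[OF A n] radius by (auto intro: le_less_trans[OF norm_ge_zero])
  obtain l where l: "l \<in> spectrum ?C" "spectral_radius ?C = norm l"
    using spectral_radius_mem_max(1)[OF C n] by auto
  obtain v where v: "v \<in> carrier_vec n" "v \<noteq> 0\<^sub>v n" "?C *\<^sub>v v = l \<cdot>\<^sub>v v"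
    using l(1) C unfolding spectrum_def eigenvalue_def eigenvector_def by auto
  have "of_real (1 / t) \<cdot>\<^sub>v (A *\<^sub>v v) = l \<cdot>\<^sub>v v"
    using v(3) smult_mult_mat_vec[OF A v(1)] by simp
  then have "of_real t \<cdot>\<^sub>v (of_real (1 / t) \<cdot>\<^sub>v (A *\<^sub>v v)) = of_real t \<cdot>\<^sub>v (l \<cdot>\<^sub>v v)"
    by simp
  then have "A *\<^sub>v v = (of_real t * l) \<cdot>\<^sub>v v"
    using t by (simp add: smult_smult_assoc flip: of_real_mult)
  then have "of_real t * l \<in> spectrum A"
    using v A unfolding spectrum_def eigenvalue_def eigenvector_def by auto
  then have "norm (of_real t * l) \<le> spectral_radius A"
    by (intro spectral_radius_mem_max(2)[OF A n] imageI)
  moreover have "norm (of_real t * l) = t * norm l"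
    using t by (simp add: norm_mult)
  ultimately have "t * norm l < t * 1"
    using radius by linarith
  then have "norm l < 1"
    using mult_less_cancel_left_pos[OF t] by blast
  then show ?thesis
    using l(2) by simp
qed

lemma rayleigh_le_spectral_radius:
  assumes A: "A \<in> carrier_mat n n" and herm: "herm A = A" and z: "z \<in> carrier_vec n"
  shows "Re ((A *\<^sub>v z) \<bullet>c z) \<le> spectral_radius A * sq_norm_vec z"
proof (cases "z = 0\<^sub>v n")
  case True
  then show ?thesis using A by simp
next
  case False
  have n: "0 < n"
    using False z by (cases n) auto
  have N: "0 < sq_norm_vec z"
    using sq_norm_vec_pos[OF z False] .
  have le_t: "Re ((A *\<^sub>v z) \<bullet>c z) \<le> t * sq_norm_vec z" if t: "spectral_radius A < t" for t
  proof -
    have "0 < t"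
      using spectral_radius_mem_max(1)[OF A n] t by (auto intro: le_less_trans[OF norm_ge_zero])
    have "Re (((of_real (1 / t) \<cdot>\<^sub>m A) *\<^sub>v z) \<bullet>c z) \<le> sq_norm_vec z"
      using A z herm spectral_radius_scaled_less_1[OF A n t]
      by (intro rayleigh_le_sq_norm_vec[of _ n]) (auto simp: herm_smult)
    then show ?thesis
      using A z \<open>0 < t\<close> by (simp add: smult_mult_mat_vec[OF A z] field_simps)
  qed
  show ?thesis
  proof (rule ccontr)
    assume "\<not> ?thesis"
    then have "spectral_radius A < Re ((A *\<^sub>v z) \<bullet>c z) / sq_norm_vec z"
      using N by (simp add: pos_less_divide_eq)
    then obtain t where t: "spectral_radius A < t" "t < Re ((A *\<^sub>v z) \<bullet>c z) / sq_norm_vec z"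
      using dense by blast
    then show False
      using le_t[OF t(1)] N by (simp add: pos_less_divide_eq)
  qed
qed

lemma spectral_radius_le_sigma_max:
  assumes G: "G \<in> carrier_mat n n" and herm: "herm G = G" and n: "0 < n"
  shows "spectral_radius G \<le> sigma_max G"
proof -
  obtain l where l: "l \<in> spectrum G" "spectral_radius G = norm l"
    using spectral_radius_mem_max(1)[OF G n] by auto
  obtain v where v: "v \<in> carrier_vec n" "v \<noteq> 0\<^sub>v n" "G *\<^sub>v v = l \<cdot>\<^sub>v v"
    using l(1) G unfolding spectrum_def eigenvalue_def eigenvector_def by auto
  have "(herm G * G) *\<^sub>v v = (l * l) \<cdot>\<^sub>v v"
    using G v by (simp add: herm mult_mat_vec smult_smult_assoc)
  then have "eigenvalue (herm G * G) (l * l)"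
    using G v unfolding eigenvalue_def eigenvector_def by auto
  moreover have "finite {e. eigenvalue (herm G * G) e}"
    using card_finite_spectrum(1)[OF mult_carrier_mat[OF herm_carrier[OF G] G]]
    unfolding spectrum_def by simp
  ultimately have "Re (l * l) \<le> Max (Re ` {e. eigenvalue (herm G * G) e})"
    by (meson Max_ge finite_imageI imageI mem_Collect_eq)
  moreover have "Re (l * l) = (norm l)\<^sup>2"
    using hermitian_eigenvalue_real[OF G herm] l(1) unfolding spectrum_def
    by (metis mem_Collect_eq Re_complex_of_real norm_of_real of_real_mult power2_abs power2_eq_square)
  ultimately show ?thesis
    unfolding sigma_max_def l(2) by (simp add: real_le_rsqrt)
qed

lemma sq_norm_mult_vec_le_sigma_max:
  assumes H: "H \<in> carrier_mat m n" and z: "z \<in> carrier_vec n"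
  shows "sq_norm_vec (H *\<^sub>v z) \<le> sigma_max (herm H * H) * sq_norm_vec z"
proof -
  have G: "herm H * H \<in> carrier_mat n n" and herm: "herm (herm H * H) = herm H * H"
    using H by (auto simp: herm_mult[of _ n m _ n])
  have "sq_norm_vec (H *\<^sub>v z) = Re (((herm H * H) *\<^sub>v z) \<bullet>c z)"
    using cscalar_prod_mult_adjoint[OF herm_carrier[OF H] z] by simp
  also have "\<dots> \<le> spectral_radius (herm H * H) * sq_norm_vec z"
    by (rule rayleigh_le_spectral_radius[OF G herm z])
  also have "\<dots> \<le> sigma_max (herm H * H) * sq_norm_vec z"
  proof (cases "n = 0")
    case True
    then show ?thesis using z by (simp add: sq_norm_vec_def)
  next
    case False
    then show ?thesis
      using spectral_radius_le_sigma_max[OF G herm] by (simp add: mult_right_mono)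
  qed
  finally show ?thesis .
qed

lemma sq_norm_adjoint_mult_vec_le_sigma_max:
  assumes H: "H \<in> carrier_mat m n" and y: "y \<in> carrier_vec m"
    and c: "sigma_max (herm H * H) \<le> c" "0 \<le> c"
  shows "sq_norm_vec (herm H *\<^sub>v y) \<le> c * sq_norm_vec y"
proof (rule sq_norm_adjoint_mult_vec_le[OF H y c(2)])
  show "sq_norm_vec (H *\<^sub>v z) \<le> c * sq_norm_vec z" if "z \<in> carrier_vec n" for z
    using sq_norm_mult_vec_le_sigma_max[OF H that] c(1)
    by (meson mult_right_mono order_trans sq_norm_vec_ge_0)
qed

section \<open>The mean-square-error matrix\<close>

lemma mat_sum_carrier:
  "(\<And>j. j \<in> set js \<Longrightarrow> f j \<in> carrier_mat r c) \<Longrightarrow> mat_sum r c f js \<in> carrier_mat r c"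
  by (induction js) (auto simp: mat_sum_def)

lemma rayleigh_mat_sum_nonneg:
  assumes y: "y \<in> carrier_vec n"
    and f: "\<And>j. j \<in> set js \<Longrightarrow> f j \<in> carrier_mat n n \<and> 0 \<le> Re ((f j *\<^sub>v y) \<bullet>c y)"
  shows "0 \<le> Re ((mat_sum n n f js *\<^sub>v y) \<bullet>c y)"
  using f
proof (induction js)
  case Nil
  have "0\<^sub>m n n *\<^sub>v y = 0\<^sub>v n"
    using y by (intro eq_vecI) (auto simp: scalar_prod_def)
  then show ?case
    using y by (simp add: mat_sum_def)
next
  case (Cons j js)
  have fj: "f j \<in> carrier_mat n n" "0 \<le> Re ((f j *\<^sub>v y) \<bullet>c y)"
    using Cons.prems by auto
  have rest: "mat_sum n n f js \<in> carrier_mat n n"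
    using Cons.prems by (intro mat_sum_carrier) auto
  have "(mat_sum n n f (j # js) *\<^sub>v y) \<bullet>c y = (f j *\<^sub>v y) \<bullet>c y + (mat_sum n n f js *\<^sub>v y) \<bullet>c y"
    using fj rest y
    by (simp add: mat_sum_def add_mult_distrib_mat_vec[of _ n n] add_scalar_prod_distrib[of _ n])
  then show ?case
    using Cons fj by simp
qed

lemma lambda_min_ge:
  assumes E: "E \<in> carrier_mat d d" and d: "0 < d"
    and form: "\<And>x. x \<in> carrier_vec d \<Longrightarrow> c * sq_norm_vec x \<le> Re ((E *\<^sub>v x) \<bullet>c x)"
  shows "c \<le> lambda_min E"
proof -
  have "c \<le> Re e" if ev: "eigenvalue E e" for e
  proof -
    obtain x where x: "x \<in> carrier_vec d" "x \<noteq> 0\<^sub>v d" "E *\<^sub>v x = e \<cdot>\<^sub>v x"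
      using ev E unfolding eigenvalue_def eigenvector_def by auto
    have "Re ((E *\<^sub>v x) \<bullet>c x) = Re e * sq_norm_vec x"
      using x by (simp add: cscalar_prod_self)
    then show ?thesis
      using form[OF x(1)] sq_norm_vec_pos[OF x(1,2)] by simp
  qed
  moreover have "finite {e. eigenvalue E e}" "{e. eigenvalue E e} \<noteq> {}"
    using card_finite_spectrum(1)[OF E] spectrum_non_empty[OF E d] unfolding spectrum_def by auto
  ultimately show ?thesis
    unfolding lambda_min_def by (simp add: Min_ge_iff)
qed

lemma weighted_sq_diff_ge:
  fixes a b c s y :: real
  assumes c: "0 < c" and s: "0 < s" and b: "b\<^sup>2 \<le> c * y"
  shows "s / (c + s) * a\<^sup>2 \<le> (a - b)\<^sup>2 + s * y"
proof -
  have "(c + s) * ((a - b)\<^sup>2 + s * (b\<^sup>2 / c)) - s * a\<^sup>2 = (c * a - (c + s) * b)\<^sup>2 / c"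
    using c by (simp add: field_simps power2_eq_square)
  moreover have "0 \<le> (c * a - (c + s) * b)\<^sup>2 / c"
    using c by simp
  ultimately have "s * a\<^sup>2 \<le> (c + s) * ((a - b)\<^sup>2 + s * (b\<^sup>2 / c))"
    by linarith
  then have "s / (c + s) * a\<^sup>2 \<le> (a - b)\<^sup>2 + s * (b\<^sup>2 / c)"
    using c s by (simp add: field_simps)
  also have "\<dots> \<le> (a - b)\<^sup>2 + s * y"
    using b c s by (simp add: field_simps)
  finally show ?thesis .
qed

definition mse_mat :: "nat \<Rightarrow> nat \<Rightarrow> complex mat \<Rightarrow> complex mat \<Rightarrow> complex mat \<Rightarrow> complex mat \<Rightarrow> real
    \<Rightarrow> complex mat" where
  "mse_mat n d H U V S s = (1\<^sub>m d - herm U * H * V) * herm (1\<^sub>m d - herm U * H * V)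
     + herm U * (S + of_real s \<cdot>\<^sub>m 1\<^sub>m n) * U"

lemma mse_mat_carrier:
  "H \<in> carrier_mat n m \<Longrightarrow> U \<in> carrier_mat n d \<Longrightarrow> V \<in> carrier_mat m d \<Longrightarrow> S \<in> carrier_mat n n
    \<Longrightarrow> mse_mat n d H U V S s \<in> carrier_mat d d"
  unfolding mse_mat_def by auto

lemma herm_one_minus_mult_vec:
  assumes H: "H \<in> carrier_mat n m" and U: "U \<in> carrier_mat n d" and V: "V \<in> carrier_mat m d"
    and x: "x \<in> carrier_vec d"
  shows "herm (1\<^sub>m d - herm U * H * V) *\<^sub>v x = x - herm V *\<^sub>v (herm H *\<^sub>v (U *\<^sub>v x))"
proof -
  have hU: "herm U \<in> carrier_mat d n" and UH: "herm U * H \<in> carrier_mat d m"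
    and hV: "herm V \<in> carrier_mat d m" and hH: "herm H \<in> carrier_mat m n"
    and HU: "herm H * U \<in> carrier_mat m d"
    using H U V by auto
  have "herm (herm U * H * V) = herm V * (herm H * U)"
    by (simp add: herm_mult[OF UH V] herm_mult[OF hU H])
  then have "herm (1\<^sub>m d - herm U * H * V) = 1\<^sub>m d - herm V * (herm H * U)"
    using UH V by (simp add: herm_minus[OF one_carrier_mat])
  then show ?thesis
    using x by (simp add: minus_mult_distrib_mat_vec[OF one_carrier_mat mult_carrier_mat[OF hV HU] x]
        assoc_mult_mat_vec[OF hV HU x] assoc_mult_mat_vec[OF hH U x])
qed

lemma mse_quadratic_form:
  assumes H: "H \<in> carrier_mat n m" and U: "U \<in> carrier_mat n d" and V: "V \<in> carrier_mat m d"
    and S: "S \<in> carrier_mat n n" and x: "x \<in> carrier_vec d"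
  shows "(mse_mat n d H U V S s *\<^sub>v x) \<bullet>c x
    = of_real (sq_norm_vec (x - herm V *\<^sub>v (herm H *\<^sub>v (U *\<^sub>v x))))
      + (S *\<^sub>v (U *\<^sub>v x)) \<bullet>c (U *\<^sub>v x) + of_real (s * sq_norm_vec (U *\<^sub>v x))"
proof -
  define F where "F = 1\<^sub>m d - herm U * H * V"
  define T where "T = S + of_real s \<cdot>\<^sub>m 1\<^sub>m n"
  define y where "y = U *\<^sub>v x"
  have F: "F \<in> carrier_mat d d" and T: "T \<in> carrier_mat n n" and y: "y \<in> carrier_vec n"
    and hU: "herm U \<in> carrier_mat d n"
    using H U V S x by (auto simp: F_def T_def y_def)
  have FF: "F * herm F \<in> carrier_mat d d" and UTU: "herm U * T * U \<in> carrier_mat d d"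
    using F hU T U by auto
  have "((F * herm F) *\<^sub>v x) \<bullet>c x = of_real (sq_norm_vec (x - herm V *\<^sub>v (herm H *\<^sub>v y)))"
    using cscalar_prod_mult_adjoint[OF F x] herm_one_minus_mult_vec[OF H U V x]
    by (simp add: F_def y_def)
  moreover have "((herm U * T * U) *\<^sub>v x) \<bullet>c x = (T *\<^sub>v y) \<bullet>c y"
    using cscalar_prod_adjoint[OF hU mult_mat_vec_carrier[OF T y] x] x y
    by (simp add: y_def assoc_mult_mat_vec[OF mult_carrier_mat[OF hU T] U x] assoc_mult_mat_vec[OF hU T])
  moreover have "(T *\<^sub>v y) \<bullet>c y = (S *\<^sub>v y) \<bullet>c y + of_real (s * sq_norm_vec y)"
    using S y by (simp add: T_def add_mult_distrib_mat_vec[of _ n n] smult_mult_mat_vec[of _ n n]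
        add_scalar_prod_distrib[of _ n] cscalar_prod_self)
  moreover have "(mse_mat n d H U V S s *\<^sub>v x) \<bullet>c x
      = ((F * herm F) *\<^sub>v x) \<bullet>c x + ((herm U * T * U) *\<^sub>v x) \<bullet>c x"
    using x by (simp add: mse_mat_def F_def[symmetric] T_def[symmetric] add_mult_distrib_mat_vec[OF FF UTU x]
        add_scalar_prod_distrib[OF mult_mat_vec_carrier[OF FF x] mult_mat_vec_carrier[OF UTU x]])
  ultimately show ?thesis
    by (simp add: y_def)
qed

lemma mse_quadratic_form_ge:
  assumes H: "H \<in> carrier_mat n m" and U: "U \<in> carrier_mat n d" and V: "V \<in> carrier_mat m d"
    and S: "S \<in> carrier_mat n n" and S_psd: "\<And>y. y \<in> carrier_vec n \<Longrightarrow> 0 \<le> Re ((S *\<^sub>v y) \<bullet>c y)"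
    and s: "0 < s" and P: "0 < P" and kappa: "0 < kappa"
    and H_bound: "\<And>y. y \<in> carrier_vec n \<Longrightarrow> sq_norm_vec (herm H *\<^sub>v y) \<le> kappa * sq_norm_vec y"
    and power: "Re (mtrace (V * herm V)) \<le> P"
    and x: "x \<in> carrier_vec d"
  shows "s / (P * kappa + s) * sq_norm_vec x \<le> Re ((mse_mat n d H U V S s *\<^sub>v x) \<bullet>c x)"
proof -
  define y where "y = U *\<^sub>v x"
  define w where "w = herm V *\<^sub>v (herm H *\<^sub>v y)"
  have y: "y \<in> carrier_vec n"
    using U x by (simp add: y_def)
  have Hy: "herm H *\<^sub>v y \<in> carrier_vec m"
    using mult_mat_vec_carrier[OF herm_carrier[OF H] y] .
  then have w: "w \<in> carrier_vec d"
    unfolding w_def using mult_mat_vec_carrier[OF herm_carrier[OF V]] by blast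
  have "sq_norm_vec w \<le> Re (mtrace (V * herm V)) * sq_norm_vec (herm H *\<^sub>v y)"
    unfolding w_def using V Hy by (rule sq_norm_adjoint_mult_vec_le_trace)
  also have "\<dots> \<le> P * (kappa * sq_norm_vec y)"
    using power H_bound[OF y] P by (intro mult_mono) auto
  finally have "(sqrt (sq_norm_vec w))\<^sup>2 \<le> (P * kappa) * sq_norm_vec y"
    by simp
  then have "s / (P * kappa + s) * (sqrt (sq_norm_vec x))\<^sup>2
      \<le> (sqrt (sq_norm_vec x) - sqrt (sq_norm_vec w))\<^sup>2 + s * sq_norm_vec y"
    using P kappa s by (intro weighted_sq_diff_ge) auto
  also have "\<dots> \<le> sq_norm_vec (x - w) + s * sq_norm_vec y"
    using sq_norm_vec_minus_ge[OF x w] by simp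
  also have "\<dots> \<le> Re ((mse_mat n d H U V S s *\<^sub>v x) \<bullet>c x)"
    using mse_quadratic_form[OF H U V S x, of s] S_psd[OF y] by (simp add: w_def y_def)
  finally show ?thesis
    by simp
qed

lemma interference_mat:
  assumes H: "H \<in> carrier_mat n m" and V: "\<And>j. j \<in> set js \<Longrightarrow> V j \<in> carrier_mat m d"
  shows "mat_sum n n (\<lambda>j. H * V j * herm (V j) * herm H) js \<in> carrier_mat n n"
    and "y \<in> carrier_vec n \<Longrightarrow> 0 \<le> Re ((mat_sum n n (\<lambda>j. H * V j * herm (V j) * herm H) js *\<^sub>v y) \<bullet>c y)"
proof -
  have gram: "H * V j * herm (V j) * herm H = (H * V j) * herm (H * V j)"
    and HV: "H * V j \<in> carrier_mat n d" if "j \<in> set js" for j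
    using H V[OF that] by (simp_all add: herm_mult[of _ n m _ d] assoc_mult_mat[of _ n d _ m _ n])
  show "mat_sum n n (\<lambda>j. H * V j * herm (V j) * herm H) js \<in> carrier_mat n n"
    using H V by (intro mat_sum_carrier) auto
  show "0 \<le> Re ((mat_sum n n (\<lambda>j. H * V j * herm (V j) * herm H) js *\<^sub>v y) \<bullet>c y)"
    if y: "y \<in> carrier_vec n"
    using y H V gram cscalar_prod_mult_adjoint[OF HV y] by (intro rayleigh_mat_sum_nonneg) auto
qed

lemma lambda_min_mse_ge:
  fixes V :: "nat \<Rightarrow> complex mat"
  assumes d: "0 < d" and H: "H \<in> carrier_mat n m" and U: "U \<in> carrier_mat n d"
    and Vk: "V k \<in> carrier_mat m d" and Vj: "\<And>j. j \<in> set js \<Longrightarrow> V j \<in> carrier_mat m d"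
    and s: "0 < s" and P: "0 < P" and kappa: "0 < kappa"
    and H_bound: "\<And>y. y \<in> carrier_vec n \<Longrightarrow> sq_norm_vec (herm H *\<^sub>v y) \<le> kappa * sq_norm_vec y"
    and power: "Re (mtrace (V k * herm (V k))) \<le> P"
  shows "s / (P * kappa + s)
    \<le> lambda_min (mse_mat n d H U (V k) (mat_sum n n (\<lambda>j. H * V j * herm (V j) * herm H) js) s)"
proof -
  let ?S = "mat_sum n n (\<lambda>j. H * V j * herm (V j) * herm H) js"
  have S: "?S \<in> carrier_mat n n"
    using Vj by (rule interference_mat(1)[OF H])
  have S_psd: "0 \<le> Re ((?S *\<^sub>v y) \<bullet>c y)" if "y \<in> carrier_vec n" for y
    using Vj that by (rule interference_mat(2)[OF H])
  show ?thesis
    by (rule lambda_min_ge[OF mse_mat_carrier[OF H U Vk S] d])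
      (rule mse_quadratic_form_ge[OF H U Vk S S_psd s P kappa H_bound power])
qed

theorem lemma1:
  fixes K M N d :: nat
    and H :: "nat \<Rightarrow> complex mat"
    and U :: "nat \<Rightarrow> complex mat"
    and V :: "nat \<Rightarrow> complex mat"
    and sigma2 :: "nat \<Rightarrow> real"
    and Pmax kappa :: real
  assumes "K \<ge> 1" and "d \<ge> 1"
    and H_dim: "\<And>k. k < K \<Longrightarrow> H k \<in> carrier_mat N M"
    and sigma_pos: "\<And>k. k < K \<Longrightarrow> sigma2 k > 0"
    and Pmax_pos: "Pmax > 0"
    and kappa_def: "kappa = Max ((\<lambda>k. sigma_max (herm (H k) * H k)) ` {0..<K})"
    and kappa_pos: "kappa > 0"
    and U_dim: "\<And>k. k < K \<Longrightarrow> U k \<in> carrier_mat N d"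
    and V_dim: "\<And>k. k < K \<Longrightarrow> V k \<in> carrier_mat M d"
    and power: "Re (\<Sum>k<K. mtrace (V k * herm (V k))) \<le> Pmax"
  shows "\<forall>k<K.
    lambda_min
      ((1\<^sub>m d - herm (U k) * H k * V k) * herm (1\<^sub>m d - herm (U k) * H k * V k)
       + herm (U k) * (mat_sum N N (\<lambda>j. H k * V j * herm (V j) * herm (H k))
                          (filter (\<lambda>j. j \<noteq> k) [0..<K])
                       + complex_of_real (sigma2 k) \<cdot>\<^sub>m 1\<^sub>m N) * U k)
    \<ge> sigma2 k / (Pmax * kappa + sigma2 k)"
proof -
  have H_bound: "sq_norm_vec (herm (H k) *\<^sub>v y) \<le> kappa * sq_norm_vec y"
    if "k < K" "y \<in> carrier_vec N" for k y
    using that kappa_pos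
    by (intro sq_norm_adjoint_mult_vec_le_sigma_max[OF H_dim]) (auto simp: kappa_def intro!: Max_ge)
  have trace_le: "Re (mtrace (V k * herm (V k))) \<le> Pmax" if "k < K" for k
    using trace_mult_adjoint_le_sum[of "{..<K}" k V, OF _ _ V_dim] that power by simp
  show ?thesis
    using \<open>d \<ge> 1\<close> H_dim U_dim V_dim sigma_pos Pmax_pos kappa_pos H_bound trace_le
    by (auto intro!: lambda_min_mse_ge[unfolded mse_mat_def])
qed

end
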